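(* There is no SSP group of $G(4,2)$-type. Consequently, if $G$ is a non-abelian SSP group of length $4$ with canonical basis $(a_1,\dots,a_4)$, then $\langle a_1,a_2,a_3\rangle$ is abelian and the cut-off point of $G$ is $3$.
   Context: Notation: $x^f$ is the image of $x$ under $f$; $[x,y]=x^{-1}y^{-1}xy$; $e$ is the identity. A triple $(G,H,f)$, where $H\le G$ and $f:H\to G$ is a homomorphism, is simple if the only subgroup $K\le H$ that is normal in $G$ and satisfies $K^f\le K$ is trivial. For such a triple put $G_0=G$, $H_0=H$, and for $k\ge1$, $G_k=(H_{k-1})^f$, $H_k=H\cap G_k$. Let $p$ be a prime or $\infty$. A polycyclic group $G$ is an SSP group with respect to $(G,H,f)$ if: (1) $f$ is injective; (2) each $(G_k,H_k,f|_{H_k})$ is a simple triple; (3) $H_k$ and $G_{k+1}$ are normal in $G_k$ and $G_k=H_kG_{k+1}$; (4) whenever $G_k$ is nontrivial, $G_k/H_k$ is cyclic of order $p$ (infinite cyclic if $p=\infty$). The length $n$ is the Hirsch length if $p=\infty$ and $\log_p|G|$ if $p$ is prime. A canonical basis of $G$ is a tuple $(a_1,\dots,a_n)$ with $a_1,\dots,a_{n-1}\in H$, $a_{i+1}=a_i^f$ for $1\le i\le n-1$, $G_i=\langle a_{i+1},\dots,a_n\rangle$ and $H_i=\langle a_{i+1},\dots,a_{n-1}\rangle$ for $0\le i\le n-1$. The cut-off point $c$ is the largest $s\in\{2,\dots,n\}$ with $[a_1,a_2]=\dots=[a_1,a_s]=e$; $G$ is then of $G(n,c)$-type. *)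

theory Defs
  imports "HOL-Algebra.Algebra" "HOL-Library.Extended_Nat" "HOL-Computational_Algebra.Primes"
begin

definition commutator :: "('a, 'b) monoid_scheme \<Rightarrow> 'a \<Rightarrow> 'a \<Rightarrow> 'a" where
  "commutator G x y = inv\<^bsub>G\<^esub> x \<otimes>\<^bsub>G\<^esub> inv\<^bsub>G\<^esub> y \<otimes>\<^bsub>G\<^esub> x \<otimes>\<^bsub>G\<^esub> y"

definition polycyclic_series :: "('a, 'b) monoid_scheme \<Rightarrow> nat \<Rightarrow> (nat \<Rightarrow> 'a set) \<Rightarrow> bool" where
  "polycyclic_series G m N \<longleftrightarrow>
     N 0 = carrier G \<and> N m = {\<one>\<^bsub>G\<^esub>} \<and>
     (\<forall>i<m. N (Suc i) \<lhd> G\<lparr>carrier := N i\<rparr> \<and>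
            cyclic_group (G\<lparr>carrier := N i\<rparr> Mod N (Suc i)))"

definition polycyclic :: "('a, 'b) monoid_scheme \<Rightarrow> bool" where
  "polycyclic G \<longleftrightarrow> group G \<and> (\<exists>m N. polycyclic_series G m N)"

(* Hirsch length: number of infinite factors in a polycyclic series (an invariant) *)
definition hirsch_length :: "('a, 'b) monoid_scheme \<Rightarrow> nat" where
  "hirsch_length G = (THE h. \<exists>m N. polycyclic_series G m N \<and>
      h = card {i. i < m \<and> infinite (carrier (G\<lparr>carrier := N i\<rparr> Mod N (Suc i)))})"

definition simple_triple :: "('a, 'b) monoid_scheme \<Rightarrow> 'a set \<Rightarrow> ('a \<Rightarrow> 'a) \<Rightarrow> bool" where
  "simple_triple G H f \<longleftrightarrow>
     (\<forall>K. K \<subseteq> H \<and> K \<lhd> G \<and> f ` K \<subseteq> K \<longrightarrow> K = {\<one>\<^bsub>G\<^esub>})"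

primrec Gseq :: "('a, 'b) monoid_scheme \<Rightarrow> 'a set \<Rightarrow> ('a \<Rightarrow> 'a) \<Rightarrow> nat \<Rightarrow> 'a set" where
  "Gseq G H f 0 = carrier G"
| "Gseq G H f (Suc k) = f ` (H \<inter> Gseq G H f k)"

definition Hseq :: "('a, 'b) monoid_scheme \<Rightarrow> 'a set \<Rightarrow> ('a \<Rightarrow> 'a) \<Rightarrow> nat \<Rightarrow> 'a set" where
  "Hseq G H f k = H \<inter> Gseq G H f k"

definition SSP_group :: "('a, 'b) monoid_scheme \<Rightarrow> 'a set \<Rightarrow> ('a \<Rightarrow> 'a) \<Rightarrow> enat \<Rightarrow> bool" where
  "SSP_group G H f p \<longleftrightarrow>
     (p = \<infinity> \<or> (\<exists>q. p = enat q \<and> Factorial_Ring.prime q)) \<and>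
     group G \<and> polycyclic G \<and> subgroup H G \<and> f \<in> hom (G\<lparr>carrier := H\<rparr>) G \<and>
     inj_on f H \<and>
     (\<forall>k. simple_triple (G\<lparr>carrier := Gseq G H f k\<rparr>) (Hseq G H f k) f) \<and>
     (\<forall>k. Hseq G H f k \<lhd> G\<lparr>carrier := Gseq G H f k\<rparr> \<and>
          Gseq G H f (Suc k) \<lhd> G\<lparr>carrier := Gseq G H f k\<rparr> \<and>
          Gseq G H f k = Hseq G H f k <#>\<^bsub>G\<^esub> Gseq G H f (Suc k)) \<and>
     (\<forall>k. Gseq G H f k \<noteq> {\<one>\<^bsub>G\<^esub>} \<longrightarrow>
          cyclic_group (G\<lparr>carrier := Gseq G H f k\<rparr> Mod Hseq G H f k) \<and>
          (case p of \<infinity> \<Rightarrow> infinite (carrier (G\<lparr>carrier := Gseq G H f k\<rparr> Mod Hseq G H f k))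
                   | enat q \<Rightarrow> order (G\<lparr>carrier := Gseq G H f k\<rparr> Mod Hseq G H f k) = q))"

definition SSP_length :: "('a, 'b) monoid_scheme \<Rightarrow> enat \<Rightarrow> real" where
  "SSP_length G p = (case p of \<infinity> \<Rightarrow> real (hirsch_length G)
                              | enat q \<Rightarrow> log (real q) (real (order G)))"

definition canonical_basis :: "('a, 'b) monoid_scheme \<Rightarrow> 'a set \<Rightarrow> ('a \<Rightarrow> 'a) \<Rightarrow> nat \<Rightarrow> (nat \<Rightarrow> 'a) \<Rightarrow> bool" where
  "canonical_basis G H f n a \<longleftrightarrow>
     (\<forall>i\<in>{1..n}. a i \<in> carrier G) \<and>
     (\<forall>i\<in>{1..n-1}. a i \<in> H) \<and>
     (\<forall>i\<in>{1..n-1}. a (Suc i) = f (a i)) \<and>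
     (\<forall>i\<le>n-1. Gseq G H f i = generate G (a ` {i+1..n}) \<and>
               Hseq G H f i = generate G (a ` {i+1..n-1}))"

definition cutoff_point :: "('a, 'b) monoid_scheme \<Rightarrow> nat \<Rightarrow> (nat \<Rightarrow> 'a) \<Rightarrow> nat \<Rightarrow> bool" where
  "cutoff_point G n a c \<longleftrightarrow>
     (let S = {s\<in>{2..n}. \<forall>j\<in>{2..s}. commutator G (a 1) (a j) = \<one>\<^bsub>G\<^esub>} in
       c \<in> S \<and> (\<forall>s\<in>S. s \<le> c))"

end

theory Submission
  imports Defs
begin

(* The factors G_3/H_3 = <a_4> and G_2/H_2 = H_2<a_4>/H_2 are both infinite cyclic or both of
   prime order, so <a_4> meets H_2 trivially and a_4^(n^2) = 1 forces a_4^n = 1.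
   The commutator [a_3,a_4] lies in H_2 and in G_3 = <a_4>, hence is trivial; pulling back
   along the injective f gives [a_2,a_3] = [a_1,a_2] = 1. Next [a_1,a_3] lies in
   H \<inter> G_1 = <a_2,a_3>, say a_2^i a_3^j, and its image [a_2,a_4] = a_3^i a_4^j lies in
   H_1 \<inter> G_2 = <a_3>, so a_4^j = 1. Conjugating a_1 a_3 = a_3 a_1 a_2^i by a_4, where
   [a_1,a_4] lies in <a_2,a_3>, then gives a_3^(i^2) = 1, hence a_4^i = 1 and [a_1,a_3] = 1.
   Thus every pair of basis elements except possibly a_1, a_4 commutes. *)

lemma (in group) inv_mult_cancel [simp]:
  "x \<in> carrier G \<Longrightarrow> y \<in> carrier G \<Longrightarrow> inv x \<otimes> (x \<otimes> y) = y"
  by (simp add: m_assoc[symmetric])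

lemma (in group) mult_inv_cancel [simp]:
  "x \<in> carrier G \<Longrightarrow> y \<in> carrier G \<Longrightarrow> x \<otimes> (inv x \<otimes> y) = y"
  by (simp add: m_assoc[symmetric])

lemma (in group) commutator_closed [simp]:
  "x \<in> carrier G \<Longrightarrow> y \<in> carrier G \<Longrightarrow> commutator G x y \<in> carrier G"
  by (simp add: commutator_def)

lemma (in group) mult_eq_mult_commutator:
  assumes "x \<in> carrier G" "y \<in> carrier G"
  shows "x \<otimes> y = y \<otimes> x \<otimes> commutator G x y"
proof -
  have "y \<otimes> x \<otimes> commutator G x y = y \<otimes> (x \<otimes> inv x) \<otimes> inv y \<otimes> (x \<otimes> y)"
    using assms by (simp only: commutator_def m_assoc inv_closed m_closed)
  then show ?thesis using assms by simp
qed

lemma (in group) commutator_eq_one_iff: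
  assumes "x \<in> carrier G" "y \<in> carrier G"
  shows "commutator G x y = \<one> \<longleftrightarrow> x \<otimes> y = y \<otimes> x"
proof
  assume "x \<otimes> y = y \<otimes> x"
  then have "commutator G x y = inv x \<otimes> (inv y \<otimes> (y \<otimes> x))"
    using assms by (simp add: commutator_def m_assoc)
  then show "commutator G x y = \<one>"
    using assms by (simp add: m_assoc[symmetric])
qed (use assms mult_eq_mult_commutator[of x y] in simp)

lemma (in group) commutator_in_normal_left:
  assumes S: "subgroup S G" and N: "N \<lhd> G\<lparr>carrier := S\<rparr>" and "x \<in> N" "y \<in> S"
  shows "commutator G x y \<in> N"
proof -
  have NG: "subgroup N G" using incl_subgroup[OF S normal_imp_subgroup[OF N]] .
  have "inv y \<otimes> x \<otimes> y \<in> N"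
    using normal.inv_op_closed1[OF N, of y x] assms by simp
  then have "inv x \<otimes> (inv y \<otimes> x \<otimes> y) \<in> N"
    using subgroup.m_closed[OF NG subgroup.m_inv_closed[OF NG \<open>x \<in> N\<close>]] by blast
  moreover have "x \<in> carrier G" "y \<in> carrier G"
    using subgroup.mem_carrier[OF NG \<open>x \<in> N\<close>] subgroup.mem_carrier[OF S \<open>y \<in> S\<close>] .
  ultimately show ?thesis by (simp add: commutator_def m_assoc)
qed

lemma (in group) commutator_in_normal_right:
  assumes S: "subgroup S G" and N: "N \<lhd> G\<lparr>carrier := S\<rparr>" and "x \<in> S" "y \<in> N"
  shows "commutator G x y \<in> N"
proof -
  have NG: "subgroup N G" using incl_subgroup[OF S normal_imp_subgroup[OF N]] .
  have "inv y \<in> N" using subgroup.m_inv_closed[OF NG \<open>y \<in> N\<close>] .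
  then have "inv x \<otimes> inv y \<otimes> x \<in> N"
    using normal.inv_op_closed1[OF N, of x "inv y"] assms by simp
  then show ?thesis
    using subgroup.m_closed[OF NG _ \<open>y \<in> N\<close>] by (simp add: commutator_def)
qed

lemma (in group) generate_commute:
  assumes "A \<subseteq> carrier G" "y \<in> carrier G" "\<And>x. x \<in> A \<Longrightarrow> x \<otimes> y = y \<otimes> x"
    and "z \<in> generate G A"
  shows "z \<otimes> y = y \<otimes> z"
  using assms(4)
proof (induction rule: generate.induct)
  case (inv h)
  then have h: "h \<in> carrier G" "h \<otimes> y = y \<otimes> h" using assms by auto
  have "h \<otimes> (y \<otimes> inv h) = h \<otimes> y \<otimes> inv h"
    using h(1) assms(2) by (simp add: m_assoc)
  also have "\<dots> = y \<otimes> h \<otimes> inv h"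
    using h(2) by simp
  also have "\<dots> = y"
    using h(1) assms(2) by (simp add: m_assoc)
  finally show ?case
    using h(1) assms(2) by (metis inv_solve_left' inv_closed m_closed)
next
  case (eng h1 h2)
  then have "h1 \<in> carrier G" "h2 \<in> carrier G"
    using generate_in_carrier assms(1) by blast+
  then show ?case using eng.IH assms(2) by (metis m_assoc)
qed (use assms in auto)

lemma (in group) generate_pairwise_commute:
  assumes "A \<subseteq> carrier G" "\<And>x y. x \<in> A \<Longrightarrow> y \<in> A \<Longrightarrow> x \<otimes> y = y \<otimes> x"
    and "z \<in> generate G A" "w \<in> generate G A"
  shows "z \<otimes> w = w \<otimes> z"
proof -
  have "z \<in> carrier G" using assms generate_in_carrier by blast
  moreover have "x \<otimes> z = z \<otimes> x" if "x \<in> A" for x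
    using generate_commute[OF assms(1) _ _ assms(3), of x] assms(1,2) that by auto
  ultimately show ?thesis using generate_commute[OF assms(1) _ _ assms(4)] by metis
qed

lemma (in group) comm_group_subgroup_generatedI:
  assumes "A \<subseteq> carrier G" "\<And>x y. x \<in> A \<Longrightarrow> y \<in> A \<Longrightarrow> x \<otimes> y = y \<otimes> x"
  shows "comm_group (subgroup_generated G A)"
proof (rule group.group_comm_groupI)
  fix x y
  assume "x \<in> carrier (subgroup_generated G A)" "y \<in> carrier (subgroup_generated G A)"
  then show "x \<otimes>\<^bsub>subgroup_generated G A\<^esub> y = y \<otimes>\<^bsub>subgroup_generated G A\<^esub> x"
    using generate_pairwise_commute[OF assms] assms(1)
    by (simp add: carrier_subgroup_generated Int_absorb1)
qed simp

lemma (in group) comm_groupI_generate: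
  assumes "carrier G = generate G A" "A \<subseteq> carrier G"
    and "\<And>x y. x \<in> A \<Longrightarrow> y \<in> A \<Longrightarrow> x \<otimes> y = y \<otimes> x"
  shows "comm_group G"
  using generate_pairwise_commute[OF assms(2,3)] assms(1) by (intro group_comm_groupI) auto

lemma (in group) int_pow_commute:
  assumes x: "x \<in> carrier G" and y: "y \<in> carrier G" and xy: "x \<otimes> y = y \<otimes> x"
  shows "x [^] (k::int) \<otimes> y [^] (l::int) = y [^] l \<otimes> x [^] k"
proof -
  have "y [^] l \<otimes> x = x \<otimes> y [^] l"
    using generate_commute[of "{y}" x "y [^] l"] x y xy generate_pow[OF y] by auto
  then show ?thesis
    using generate_commute[of "{x}" "y [^] l" "x [^] k"] x y generate_pow[OF x] by auto
qed

lemma (in group) generate_commuting_pair: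
  assumes x: "x \<in> carrier G" and y: "y \<in> carrier G" and xy: "x \<otimes> y = y \<otimes> x"
    and "z \<in> generate G {x, y}"
  obtains i j :: int where "z = x [^] i \<otimes> y [^] j"
proof -
  have "\<exists>(i::int) (j::int). z = x [^] i \<otimes> y [^] j"
    using assms(4)
  proof (induction rule: generate.induct)
    case one
    have "\<one> = x [^] (0::int) \<otimes> y [^] (0::int)" by simp
    then show ?case by blast
  next
    case (incl h)
    then have "h = x [^] (1::int) \<otimes> y [^] (0::int) \<or> h = x [^] (0::int) \<otimes> y [^] (1::int)"
      using x y by auto
    then show ?case by blast
  next
    case (inv h)
    then have "inv h = x [^] (-1::int) \<otimes> y [^] (0::int) \<or> inv h = x [^] (0::int) \<otimes> y [^] (-1::int)"
      using x y by (auto simp: int_pow_neg)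
    then show ?case by blast
  next
    case (eng h1 h2)
    then obtain i j k l :: int where "h1 = x [^] i \<otimes> y [^] j" "h2 = x [^] k \<otimes> y [^] l"
      by blast
    then have "h1 \<otimes> h2 = x [^] i \<otimes> (y [^] j \<otimes> x [^] k) \<otimes> y [^] l"
      using x y by (simp add: m_assoc)
    also have "\<dots> = x [^] i \<otimes> (x [^] k \<otimes> y [^] j) \<otimes> y [^] l"
      using int_pow_commute[OF x y xy, of k j] by simp
    also have "\<dots> = x [^] (i + k) \<otimes> y [^] (j + l)"
      using x y by (simp add: m_assoc int_pow_mult)
    finally show ?case by blast
  qed
  then show ?thesis using that by blast
qed

lemma (in group) conj_int_pow:
  assumes g: "g \<in> carrier G" and x: "x \<in> carrier G"
  shows "inv g \<otimes> x [^] (k::int) \<otimes> g = (inv g \<otimes> x \<otimes> g) [^] k"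
proof -
  have "(\<lambda>z. inv g \<otimes> z \<otimes> g) \<in> hom G G"
    by (rule homI) (auto simp: g m_assoc)
  from hom_int_pow[OF this x is_group is_group] show ?thesis by simp
qed

lemma (in group) int_pow_twisted_commute:
  assumes x: "x \<in> carrier G" and g: "g \<in> carrier G" and w: "w \<in> carrier G"
    and xg: "x \<otimes> g = g \<otimes> x \<otimes> w" and xw: "x \<otimes> w = w \<otimes> x"
  shows "x [^] (k::int) \<otimes> g = g \<otimes> x [^] k \<otimes> w [^] k"
proof -
  have "inv g \<otimes> x \<otimes> g = x \<otimes> w"
    using xg x g w by (simp add: m_assoc)
  then have "inv g \<otimes> x [^] k \<otimes> g = x [^] k \<otimes> w [^] k"
    using conj_int_pow[OF g x, of k] int_pow_mult_distrib[OF xw x w] by simp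
  then have "g \<otimes> (inv g \<otimes> x [^] k \<otimes> g) = g \<otimes> (x [^] k \<otimes> w [^] k)" by simp
  then show ?thesis using x g w by (simp add: m_assoc[symmetric])
qed

lemma (in group) twisted_commutation_trivial:
  assumes carr: "x \<in> carrier G" "y \<in> carrier G" "t \<in> carrier G" "u \<in> carrier G"
      "e \<in> carrier G" "w \<in> carrier G"
    and xy: "x \<otimes> y = y \<otimes> x \<otimes> u" and xt: "x \<otimes> t = t \<otimes> x \<otimes> e"
    and ut: "u \<otimes> t = t \<otimes> u \<otimes> w" and yt: "y \<otimes> t = t \<otimes> y"
    and ey: "e \<otimes> y = y \<otimes> e" and eu: "e \<otimes> u = u \<otimes> e"
  shows "w = \<one>"
proof -
  \<comment> \<open>move t to the front of x y t in two ways\<close>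
  have "x \<otimes> y \<otimes> t = y \<otimes> x \<otimes> (u \<otimes> t)" using xy carr by (simp add: m_assoc)
  also have "\<dots> = y \<otimes> (x \<otimes> t) \<otimes> u \<otimes> w" using ut carr by (simp add: m_assoc)
  also have "\<dots> = y \<otimes> t \<otimes> x \<otimes> e \<otimes> u \<otimes> w" using xt carr by (simp add: m_assoc)
  also have "\<dots> = t \<otimes> y \<otimes> x \<otimes> e \<otimes> u \<otimes> w" using yt carr by simp
  finally have "x \<otimes> y \<otimes> t = t \<otimes> y \<otimes> x \<otimes> e \<otimes> u \<otimes> w" .
  moreover have "x \<otimes> y \<otimes> t = x \<otimes> t \<otimes> y" using yt carr by (simp add: m_assoc)
  also have "\<dots> = t \<otimes> x \<otimes> (e \<otimes> y)" using xt carr by (simp add: m_assoc)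
  also have "\<dots> = t \<otimes> (x \<otimes> y) \<otimes> e" using ey carr by (simp add: m_assoc)
  also have "\<dots> = t \<otimes> y \<otimes> x \<otimes> (u \<otimes> e)" using xy carr by (simp add: m_assoc)
  also have "\<dots> = t \<otimes> y \<otimes> x \<otimes> e \<otimes> u" using eu carr by (simp add: m_assoc)
  ultimately have "t \<otimes> y \<otimes> x \<otimes> e \<otimes> u \<otimes> w = t \<otimes> y \<otimes> x \<otimes> e \<otimes> u \<otimes> \<one>"
    using carr by simp
  then show ?thesis using carr by (metis l_cancel m_closed one_closed)
qed

lemma (in group) int_pow_square_eq_one:
  assumes x: "x \<in> carrier G" and ord: "ord x = 0 \<or> Factorial_Ring.prime (ord x)"
    and "x [^] (n * n :: int) = \<one>"
  shows "x [^] n = \<one>"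
proof -
  have dvd: "int (ord x) dvd n * n" using int_pow_eq_id[OF x] assms(3) by simp
  from ord have "int (ord x) dvd n"
  proof
    assume "Factorial_Ring.prime (ord x)"
    then show ?thesis using dvd prime_dvd_mult_iff[of "int (ord x)"] by auto
  qed (use dvd in simp)
  then show ?thesis using int_pow_eq_id[OF x] by simp
qed

lemma (in group) FactGroup_cyclic_carrier_subset:
  assumes N: "subgroup N G" and x: "x \<in> carrier G" and s: "s > 0" and xs: "x [^] (s::int) \<in> N"
  shows "carrier (G\<lparr>carrier := N <#> generate G {x}\<rparr> Mod N) \<subseteq> (\<lambda>k. N #> x [^] k) ` {0..<s}"
proof
  fix C assume "C \<in> carrier (G\<lparr>carrier := N <#> generate G {x}\<rparr> Mod N)"
  then obtain g where g: "g \<in> N <#> generate G {x}" and "C = N #> g"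
    unfolding carrier_FactGroup by (auto simp: r_coset_def)
  moreover obtain h and t :: int where h: "h \<in> N" and "g = h \<otimes> x [^] t"
    using g unfolding set_mult_def generate_pow[OF x] by blast
  ultimately have C: "C = N #> (h \<otimes> x [^] t)" by simp
  have Nc: "N \<subseteq> carrier G" using N subgroup.subset by blast
  have "x [^] t = (x [^] s) [^] (t div s) \<otimes> x [^] (t mod s)"
    using x by (metis int_pow_mult int_pow_pow mult_div_mod_eq)
  define n where "n = h \<otimes> (x [^] s) [^] (t div s)"
  have n: "n \<in> N"
    unfolding n_def using h subgroup_int_pow_closed[OF N xs] subgroup.m_closed[OF N] by blast
  have "h \<otimes> x [^] t = n \<otimes> x [^] (t mod s)"
    using h Nc x unfolding n_def \<open>x [^] t = _\<close> by (simp add: m_assoc subsetD)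
  then have "C = (N #> n) #> x [^] (t mod s)"
    using C coset_mult_assoc[OF Nc] n Nc x by (simp add: subsetD)
  then have "C = N #> x [^] (t mod s)"
    using coset_join2[OF subsetD[OF Nc n] N n] by simp
  then show "C \<in> (\<lambda>k. N #> x [^] k) ` {0..<s}" using s by simp
qed

lemma (in group) int_pow_in_subgroup_infinite_quotient:
  assumes N: "subgroup N G" and x: "x \<in> carrier G"
    and inf: "infinite (carrier (G\<lparr>carrier := N <#> generate G {x}\<rparr> Mod N))"
    and r: "x [^] (r::int) \<in> N"
  shows "r = 0"
proof (rule ccontr)
  assume "r \<noteq> 0"
  have "x [^] \<bar>r\<bar> \<in> N"
    using r subgroup.m_inv_closed[OF N r] x by (cases "r \<ge> 0") (simp_all add: int_pow_neg[symmetric])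
  then have "carrier (G\<lparr>carrier := N <#> generate G {x}\<rparr> Mod N) \<subseteq> (\<lambda>k. N #> x [^] k) ` {0..<\<bar>r\<bar>}"
    using FactGroup_cyclic_carrier_subset[OF N x] \<open>r \<noteq> 0\<close> by simp
  then show False using inf finite_subset by blast
qed

lemma (in group) int_pow_in_subgroup_prime_quotient:
  assumes N: "subgroup N G" and x: "x \<in> carrier G" and p: "Factorial_Ring.prime (ord x)"
    and card: "order (G\<lparr>carrier := N <#> generate G {x}\<rparr> Mod N) = ord x"
    and r: "x [^] (r::int) \<in> N"
  shows "x [^] r = \<one>"
proof (rule ccontr)
  assume "x [^] r \<noteq> \<one>"
  then have "\<not> int (ord x) dvd r" using int_pow_eq_id[OF x] by simp
  moreover have "Factorial_Ring.prime (int (ord x))" using p by simp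
  ultimately have "coprime r (int (ord x))"
    using prime_imp_coprime coprime_commute by blast
  then obtain u v where uv: "u * r + v * int (ord x) = 1"
    using bezout_int[of r "int (ord x)"] by (auto simp: coprime_iff_gcd_eq_1)
  have "x [^] (1::int) = (x [^] r) [^] u \<otimes> (x [^] int (ord x)) [^] v"
    using uv x by (metis int_pow_mult int_pow_pow mult.commute)
  moreover have "x [^] int (ord x) = \<one>" using int_pow_eq_id[OF x] by simp
  ultimately have "x [^] (1::int) = (x [^] r) [^] u" using x by (simp del: int_pow_1)
  then have "x [^] (1::int) \<in> N" using subgroup_int_pow_closed[OF N r, of u] by (simp only:)
  moreover have "{0..<(1::int)} = {0}" by auto
  ultimately have "carrier (G\<lparr>carrier := N <#> generate G {x}\<rparr> Mod N) \<subseteq> {N #> x [^] (0::int)}"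
    using FactGroup_cyclic_carrier_subset[OF N x, of 1] by simp
  then have "order (G\<lparr>carrier := N <#> generate G {x}\<rparr> Mod N) \<le> 1"
    unfolding order_def using card_mono[of "{N #> x [^] (0::int)}"] by fastforce
  then show False using card prime_ge_2_nat[OF p] by simp
qed

lemma (in group) FactGroup_trivial_carrier:
  assumes "S \<subseteq> carrier G"
  shows "carrier (G\<lparr>carrier := S\<rparr> Mod {\<one>}) = (\<lambda>g. {g}) ` S"
  using assms by (auto simp: carrier_FactGroup r_coset_def subsetD)

lemma cutoff_point_ge:
  assumes "cutoff_point G n a c" "s \<in> {2..n}"
    and "\<And>j. j \<in> {2..s} \<Longrightarrow> commutator G (a 1) (a j) = \<one>\<^bsub>G\<^esub>"
  shows "s \<le> c"
  using assms unfolding cutoff_point_def Let_def by blast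

lemma cutoff_pointI:
  assumes "c \<in> {2..n}" "\<And>j. j \<in> {2..c} \<Longrightarrow> commutator G (a 1) (a j) = \<one>\<^bsub>G\<^esub>"
    and "c = n \<or> commutator G (a 1) (a (Suc c)) \<noteq> \<one>\<^bsub>G\<^esub>"
  shows "cutoff_point G n a c"
  unfolding cutoff_point_def Let_def
proof (intro conjI ballI)
  fix s assume s: "s \<in> {s \<in> {2..n}. \<forall>j\<in>{2..s}. commutator G (a 1) (a j) = \<one>\<^bsub>G\<^esub>}"
  show "s \<le> c"
  proof (rule ccontr)
    assume "\<not> s \<le> c"
    then show False using s assms(1,3) by auto
  qed
qed (use assms in auto)

locale ssp_basis4 = group +
  fixes H :: "'a set" and f :: "'a \<Rightarrow> 'a" and p :: enat and a :: "nat \<Rightarrow> 'a"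
  assumes SSP: "SSP_group G H f p" and basis: "canonical_basis G H f 4 a"
begin

(* One_nat_def is a simp rule, so simp turns a 1 into a (Suc 0) and then no longer matches
   facts stated for a 1; such facts are therefore often supplied explicitly below. *)
lemma basis_carrier [simp]:
  "a 1 \<in> carrier G" "a 2 \<in> carrier G" "a 3 \<in> carrier G" "a 4 \<in> carrier G"
  using basis unfolding canonical_basis_def by auto

lemma basis_in_H: "a 1 \<in> H" "a 2 \<in> H" "a 3 \<in> H"
  using basis unfolding canonical_basis_def by auto

lemma f_basis [simp]: "f (a 1) = a 2" "f (a 2) = a 3" "f (a 3) = a 4"
proof -
  have "a (Suc i) = f (a i)" if "i \<in> {1..3}" for i
    using basis that unfolding canonical_basis_def by auto
  from this[of 1] this[of 2] this[of 3] show "f (a 1) = a 2" "f (a 2) = a 3" "f (a 3) = a 4"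
    by (simp_all add: numeral_eq_Suc)
qed

lemma Gseq_Hseq_basis:
  "carrier G = generate G {a 1, a 2, a 3, a 4}" "Hseq G H f 0 = generate G {a 1, a 2, a 3}"
  "Gseq G H f 1 = generate G {a 2, a 3, a 4}" "Hseq G H f 1 = generate G {a 2, a 3}"
  "Gseq G H f 2 = generate G {a 3, a 4}" "Hseq G H f 2 = generate G {a 3}"
  "Gseq G H f 3 = generate G {a 4}" "Hseq G H f 3 = {\<one>}"
proof -
  have gen: "Gseq G H f i = generate G (a ` {i+1..4}) \<and> Hseq G H f i = generate G (a ` {i+1..3})"
    if "i \<le> 3" for i
    using basis that unfolding canonical_basis_def by simp
  have succ: "(0::nat) + 1 = 1" "(1::nat) + 1 = 2" "(2::nat) + 1 = 3" "(3::nat) + 1 = 4"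
    by simp_all
  have img: "a ` {1..4} = {a 1, a 2, a 3, a 4}" "a ` {1..3} = {a 1, a 2, a 3}"
    "a ` {2..4} = {a 2, a 3, a 4}" "a ` {2..3} = {a 2, a 3}"
    "a ` {3..4} = {a 3, a 4}" "a ` {3..3} = {a 3}" "a ` {4..4} = {a 4}" "a ` {4..3} = {}"
    by (auto simp: eval_nat_numeral atLeastAtMostSuc_conv)
  from gen[of 0] gen[of 1] gen[of 2] gen[of 3]
  show "carrier G = generate G {a 1, a 2, a 3, a 4}" "Hseq G H f 0 = generate G {a 1, a 2, a 3}"
    "Gseq G H f 1 = generate G {a 2, a 3, a 4}" "Hseq G H f 1 = generate G {a 2, a 3}"
    "Gseq G H f 2 = generate G {a 3, a 4}" "Hseq G H f 2 = generate G {a 3}"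
    "Gseq G H f 3 = generate G {a 4}" "Hseq G H f 3 = {\<one>}"
    unfolding succ img by (simp_all add: generate_empty)
qed

lemma H_subgroup: "subgroup H G"
  using SSP unfolding SSP_group_def by blast

lemma f_group_hom: "group_hom (G\<lparr>carrier := H\<rparr>) G f"
  using SSP H_subgroup subgroup.subgroup_is_group[OF H_subgroup is_group]
  unfolding SSP_group_def group_hom_def group_hom_axioms_def by (simp add: is_group)

lemma f_mult: "x \<in> H \<Longrightarrow> y \<in> H \<Longrightarrow> f (x \<otimes> y) = f x \<otimes> f y"
  using group_hom.hom_mult[OF f_group_hom] by simp

lemma f_inv: "x \<in> H \<Longrightarrow> f (inv x) = inv (f x)"
  using group_hom.hom_inv[OF f_group_hom] m_inv_consistent[OF H_subgroup] by simp

lemma f_int_pow: "x \<in> H \<Longrightarrow> f (x [^] (k::int)) = f x [^] k"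
  using group_hom.hom_int_pow[OF f_group_hom] int_pow_consistent[OF H_subgroup] by simp

lemma f_inj: "inj_on f H"
  using SSP unfolding SSP_group_def by blast

lemma f_eq_one_iff: "x \<in> H \<Longrightarrow> f x = \<one> \<longleftrightarrow> x = \<one>"
  using f_inj group_hom.hom_one[OF f_group_hom] subgroup.one_closed[OF H_subgroup]
  by (metis inj_onD monoid.select_convs(2) partial_object.update_convs(1) monoid.surjective)

lemma int_pow_eq_one_of_image:
  assumes "x \<in> H" "f x [^] (k::int) = \<one>"
  shows "x [^] k = \<one>"
  using assms f_eq_one_iff[of "x [^] k"] f_int_pow subgroup_int_pow_closed[OF H_subgroup] by simp

lemma f_commutator:
  "x \<in> H \<Longrightarrow> y \<in> H \<Longrightarrow> f (commutator G x y) = commutator G (f x) (f y)"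
  unfolding commutator_def
  by (simp add: f_mult f_inv subgroup.m_closed[OF H_subgroup] subgroup.m_inv_closed[OF H_subgroup])

lemma commute_of_image_commute:
  assumes "x \<in> H" "y \<in> H" "f x \<otimes> f y = f y \<otimes> f x"
  shows "x \<otimes> y = y \<otimes> x"
proof -
  have "f x \<in> carrier G" "f y \<in> carrier G" "x \<in> carrier G" "y \<in> carrier G"
    using assms(1,2) f_group_hom group_hom.hom_closed subgroup.mem_carrier[OF H_subgroup] by force+
  moreover have "commutator G x y \<in> H"
    using assms H_subgroup unfolding commutator_def
    by (simp add: subgroup.m_closed subgroup.m_inv_closed)
  ultimately show ?thesis
    using assms f_eq_one_iff f_commutator commutator_eq_one_iff by metis
qed

lemma Hseq_normal: "Hseq G H f k \<lhd> G\<lparr>carrier := Gseq G H f k\<rparr>"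
  and Gseq_Suc_normal: "Gseq G H f (Suc k) \<lhd> G\<lparr>carrier := Gseq G H f k\<rparr>"
  and Gseq_eq_set_mult: "Gseq G H f k = Hseq G H f k <#> Gseq G H f (Suc k)"
  using SSP unfolding SSP_group_def by blast+

lemma Gseq_quotient_size:
  assumes "Gseq G H f k \<noteq> {\<one>}"
  shows "(p = \<infinity> \<and> infinite (carrier (G\<lparr>carrier := Gseq G H f k\<rparr> Mod Hseq G H f k))) \<or>
    (\<exists>q. p = enat q \<and> Factorial_Ring.prime q \<and>
       order (G\<lparr>carrier := Gseq G H f k\<rparr> Mod Hseq G H f k) = q)"
proof -
  have "p = \<infinity> \<or> (\<exists>q. p = enat q \<and> Factorial_Ring.prime q)"
    and "case p of \<infinity> \<Rightarrow> infinite (carrier (G\<lparr>carrier := Gseq G H f k\<rparr> Mod Hseq G H f k))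
      | enat q \<Rightarrow> order (G\<lparr>carrier := Gseq G H f k\<rparr> Mod Hseq G H f k) = q"
    using SSP assms unfolding SSP_group_def by blast+
  then show ?thesis by (cases p) auto
qed

lemma normal_series_basis:
  "generate G {a 1, a 2, a 3} \<lhd> G\<lparr>carrier := carrier G\<rparr>"
  "generate G {a 2, a 3, a 4} \<lhd> G\<lparr>carrier := carrier G\<rparr>"
  "generate G {a 2, a 3} \<lhd> G\<lparr>carrier := generate G {a 2, a 3, a 4}\<rparr>"
  "generate G {a 3} \<lhd> G\<lparr>carrier := generate G {a 3, a 4}\<rparr>"
  "generate G {a 4} \<lhd> G\<lparr>carrier := generate G {a 3, a 4}\<rparr>"
proof -
  have "Suc 0 = 1" "Suc 2 = 3" by simp_all
  with Hseq_normal[of 0] Hseq_normal[of 1] Hseq_normal[of 2]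
    Gseq_Suc_normal[of 0] Gseq_Suc_normal[of 2]
  show "generate G {a 1, a 2, a 3} \<lhd> G\<lparr>carrier := carrier G\<rparr>"
    "generate G {a 2, a 3, a 4} \<lhd> G\<lparr>carrier := carrier G\<rparr>"
    "generate G {a 2, a 3} \<lhd> G\<lparr>carrier := generate G {a 2, a 3, a 4}\<rparr>"
    "generate G {a 3} \<lhd> G\<lparr>carrier := generate G {a 3, a 4}\<rparr>"
    "generate G {a 4} \<lhd> G\<lparr>carrier := generate G {a 3, a 4}\<rparr>"
    unfolding Gseq.simps(1) by (simp_all only: Gseq_Hseq_basis(2-8))
qed

lemma H_inter_basis:
  "H \<inter> generate G {a 2, a 3, a 4} = generate G {a 2, a 3}"
  "H \<inter> generate G {a 3, a 4} = generate G {a 3}"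
  using Gseq_Hseq_basis(3-6) unfolding Hseq_def by simp_all

lemma ord_a4:
  assumes "a 4 \<noteq> \<one>"
  shows "(p = \<infinity> \<and> ord (a 4) = 0) \<or> (p = enat (ord (a 4)) \<and> Factorial_Ring.prime (ord (a 4)))"
proof -
  have quot: "carrier (G\<lparr>carrier := Gseq G H f 3\<rparr> Mod Hseq G H f 3) = (\<lambda>g. {g}) ` generate G {a 4}"
    unfolding Gseq_Hseq_basis(7,8) by (rule FactGroup_trivial_carrier[OF generate_incl]) simp
  have inj: "inj_on (\<lambda>g. {g}) (generate G {a 4})" by (simp add: inj_on_def)
  have "Gseq G H f 3 \<noteq> {\<one>}"
    using assms Gseq_Hseq_basis(7) generate.incl[of "a 4" "{a 4}" G] by auto
  from Gseq_quotient_size[OF this] show ?thesis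
    unfolding quot order_def card_image[OF inj] finite_image_iff[OF inj] generate_pow_card[OF basis_carrier(4)]
    by auto
qed

lemma a4_int_pow_square:
  assumes "a 4 [^] (n * n :: int) = \<one>"
  shows "a 4 [^] n = \<one>"
proof (cases "a 4 = \<one>")
  case False
  then show ?thesis using int_pow_square_eq_one[OF basis_carrier(4) _ assms] ord_a4 by blast
qed simp

lemma a4_int_pow_in_generate_a3:
  assumes r: "a 4 [^] (r::int) \<in> generate G {a 3}"
  shows "a 4 [^] r = \<one>"
proof (cases "a 4 = \<one>")
  case False
  have N: "subgroup (generate G {a 3}) G" by (simp add: generate_is_subgroup)
  have G2: "Gseq G H f 2 = generate G {a 3} <#> generate G {a 4}"
    using Gseq_eq_set_mult[of 2] Gseq_Hseq_basis by (simp add: numeral_eq_Suc)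
  have "a 4 \<in> Gseq G H f 2" "a 4 \<noteq> \<one>"
    using False Gseq_Hseq_basis(5) generate.incl[of "a 4" "{a 3, a 4}" G] by auto
  then have "Gseq G H f 2 \<noteq> {\<one>}" by auto
  note factor = Gseq_quotient_size[OF this, unfolded G2 Gseq_Hseq_basis(6)]
  from ord_a4[OF False] show ?thesis
  proof
    assume "p = \<infinity> \<and> ord (a 4) = 0"
    then have "r = 0"
      using int_pow_in_subgroup_infinite_quotient[OF N basis_carrier(4) _ r] factor by auto
    then show ?thesis by simp
  next
    assume "p = enat (ord (a 4)) \<and> Factorial_Ring.prime (ord (a 4))"
    then show ?thesis
      using int_pow_in_subgroup_prime_quotient[OF N basis_carrier(4) _ _ r] factor by auto
  qed
qed simp

lemma a3_a4_commute: "a 3 \<otimes> a 4 = a 4 \<otimes> a 3"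
proof -
  have G2: "subgroup (generate G {a 3, a 4}) G" by (simp add: generate_is_subgroup)
  have "commutator G (a 3) (a 4) \<in> generate G {a 3}"
    using commutator_in_normal_left[OF G2 normal_series_basis(4)] by (simp add: generate.incl)
  moreover have "commutator G (a 3) (a 4) \<in> generate G {a 4}"
    using commutator_in_normal_right[OF G2 normal_series_basis(5)] by (simp add: generate.incl)
  then obtain r :: int where "commutator G (a 3) (a 4) = a 4 [^] r"
    using generate_pow[of "a 4"] by auto
  ultimately have "commutator G (a 3) (a 4) = \<one>"
    using a4_int_pow_in_generate_a3 by simp
  then show ?thesis using commutator_eq_one_iff by simp
qed

lemma a2_a3_commute: "a 2 \<otimes> a 3 = a 3 \<otimes> a 2"
  by (rule commute_of_image_commute[OF basis_in_H(2,3)]) (simp only: f_basis a3_a4_commute)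

lemma a1_a2_commute: "a 1 \<otimes> a 2 = a 2 \<otimes> a 1"
  by (rule commute_of_image_commute[OF basis_in_H(1,2)]) (simp only: f_basis a2_a3_commute)

lemma commutator_a1_a3_in: "commutator G (a 1) (a 3) \<in> generate G {a 2, a 3}"
proof -
  have "commutator G (a 1) (a 3) \<in> H"
    using basis_in_H H_subgroup unfolding commutator_def
    by (simp add: subgroup.m_closed subgroup.m_inv_closed)
  moreover have "commutator G (a 1) (a 3) \<in> generate G {a 2, a 3, a 4}"
    using commutator_in_normal_right[OF subgroup_self normal_series_basis(2) basis_carrier(1)]
    by (simp add: generate.incl)
  ultimately show ?thesis using H_inter_basis(1) by blast
qed

lemma commutator_a1_a3_eq_pow:
  obtains i :: int
  where "commutator G (a 1) (a 3) = a 2 [^] i" "commutator G (a 2) (a 4) = a 3 [^] i"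
proof -
  obtain i j :: int where c: "commutator G (a 1) (a 3) = a 2 [^] i \<otimes> a 3 [^] j"
    by (rule generate_commuting_pair[OF basis_carrier(2,3) a2_a3_commute commutator_a1_a3_in])
  have "f (commutator G (a 1) (a 3)) = commutator G (a 2) (a 4)"
    using f_commutator[OF basis_in_H(1,3)] by (simp only: f_basis)
  then have d: "commutator G (a 2) (a 4) = a 3 [^] i \<otimes> a 4 [^] j"
    using c basis_in_H
    by (simp add: f_mult f_int_pow subgroup_int_pow_closed[OF H_subgroup])
  have G1: "subgroup (generate G {a 2, a 3, a 4}) G"
    and G2: "subgroup (generate G {a 3, a 4}) G"
    and H2: "subgroup (generate G {a 3}) G" by (simp_all add: generate_is_subgroup)
  have "commutator G (a 2) (a 4) \<in> generate G {a 2, a 3}"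
    using commutator_in_normal_left[OF G1 normal_series_basis(3)] by (simp add: generate.incl)
  moreover have "commutator G (a 2) (a 4) \<in> generate G {a 3, a 4}"
    unfolding d using subgroup.m_closed[OF G2] subgroup_int_pow_closed[OF G2]
    by (simp add: generate.incl)
  moreover have "generate G {a 2, a 3} \<subseteq> H"
    using basis_in_H by (simp add: generate_subgroup_incl H_subgroup)
  ultimately have d_in: "commutator G (a 2) (a 4) \<in> generate G {a 3}"
    using H_inter_basis(2) by blast
  have "a 4 [^] j = inv (a 3 [^] i) \<otimes> commutator G (a 2) (a 4)"
    unfolding d by simp
  also have "\<dots> \<in> generate G {a 3}"
    using d_in subgroup_int_pow_closed[OF H2, of "a 3" i]
    by (simp add: generate.incl subgroup.m_closed[OF H2] subgroup.m_inv_closed[OF H2])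
  finally have "a 4 [^] j = \<one>" by (rule a4_int_pow_in_generate_a3)
  moreover have "a 3 [^] j = \<one>"
    using int_pow_eq_one_of_image[OF basis_in_H(3)] calculation by simp
  ultimately show ?thesis using that c d by simp
qed

lemma commutator_a1_a4_in: "commutator G (a 1) (a 4) \<in> generate G {a 2, a 3}"
proof -
  have "commutator G (a 1) (a 4) \<in> generate G {a 1, a 2, a 3}"
    using commutator_in_normal_left[OF subgroup_self normal_series_basis(1) _ basis_carrier(4)]
    by (simp add: generate.incl)
  moreover have "generate G {a 1, a 2, a 3} \<subseteq> H"
    using basis_in_H by (simp add: generate_subgroup_incl H_subgroup)
  moreover have "commutator G (a 1) (a 4) \<in> generate G {a 2, a 3, a 4}"
    using commutator_in_normal_right[OF subgroup_self normal_series_basis(2) basis_carrier(1)]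
    by (simp add: generate.incl)
  ultimately show ?thesis using H_inter_basis(1) by blast
qed

lemma generate_a2_a3_commute:
  "x \<in> generate G {a 2, a 3} \<Longrightarrow> y \<in> generate G {a 2, a 3} \<Longrightarrow> x \<otimes> y = y \<otimes> x"
  by (rule generate_pairwise_commute[of "{a 2, a 3}"]) (auto simp: a2_a3_commute)

lemma a2_pow_a4_twisted_commute:
  fixes i :: int
  assumes "commutator G (a 2) (a 4) = a 3 [^] i"
  shows "a 2 [^] i \<otimes> a 4 = a 4 \<otimes> a 2 [^] i \<otimes> a 3 [^] (i * i)"
proof -
  have "a 2 [^] i \<otimes> a 4 = a 4 \<otimes> a 2 [^] i \<otimes> (a 3 [^] i) [^] i"
  proof (rule int_pow_twisted_commute)
    show "a 2 \<otimes> a 4 = a 4 \<otimes> a 2 \<otimes> a 3 [^] i"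
      using mult_eq_mult_commutator[of "a 2" "a 4"] assms by simp
    show "a 2 \<otimes> a 3 [^] i = a 3 [^] i \<otimes> a 2"
      using int_pow_commute[OF _ _ a2_a3_commute, of 1 i] by simp
  qed simp_all
  then show ?thesis by (simp add: int_pow_pow)
qed

lemma a1_a3_commute: "a 1 \<otimes> a 3 = a 3 \<otimes> a 1"
proof -
  obtain i :: int where c: "commutator G (a 1) (a 3) = a 2 [^] i"
    and d: "commutator G (a 2) (a 4) = a 3 [^] i"
    by (rule commutator_a1_a3_eq_pow)
  define e where "e = commutator G (a 1) (a 4)"
  have gen: "e \<in> generate G {a 2, a 3}" "a 3 \<in> generate G {a 2, a 3}"
    "a 2 [^] i \<in> generate G {a 2, a 3}"
    using commutator_a1_a4_in generate.incl[of _ "{a 2, a 3}" G]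
      subgroup_int_pow_closed[OF generate_is_subgroup, of "{a 2, a 3}" "a 2"]
    by (auto simp: e_def)
  have "a 3 [^] (i * i) = \<one>"
  proof (rule twisted_commutation_trivial[of "a 1" "a 3" "a 4" "a 2 [^] i" e])
    show "a 1 \<otimes> a 3 = a 3 \<otimes> a 1 \<otimes> a 2 [^] i"
      using mult_eq_mult_commutator[OF basis_carrier(1,3)] c by simp
    show "a 1 \<otimes> a 4 = a 4 \<otimes> a 1 \<otimes> e"
      unfolding e_def by (rule mult_eq_mult_commutator[OF basis_carrier(1,4)])
    show "a 2 [^] i \<otimes> a 4 = a 4 \<otimes> a 2 [^] i \<otimes> a 3 [^] (i * i)"
      using a2_pow_a4_twisted_commute[OF d] .
    show "e \<otimes> a 3 = a 3 \<otimes> e" "e \<otimes> a 2 [^] i = a 2 [^] i \<otimes> e"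
      using generate_a2_a3_commute gen by blast+
  qed (use basis_carrier in \<open>simp_all add: a3_a4_commute e_def\<close>)
  then have "a 4 [^] (i * i) = \<one>"
    using f_int_pow[OF basis_in_H(3), of "i * i"] group_hom.hom_one[OF f_group_hom] by simp
  then have "a 4 [^] i = \<one>" by (rule a4_int_pow_square)
  then have "a 2 [^] i = \<one>"
    using int_pow_eq_one_of_image[OF basis_in_H(2)] int_pow_eq_one_of_image[OF basis_in_H(3)] by simp
  then show ?thesis using c commutator_eq_one_iff[OF basis_carrier(1,3)] by simp
qed

lemma a2_a4_commute: "a 2 \<otimes> a 4 = a 4 \<otimes> a 2"
proof -
  have "commutator G (a 2) (a 4) = f (commutator G (a 1) (a 3))"
    using f_commutator[OF basis_in_H(1,3)] by (simp only: f_basis)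
  also have "\<dots> = \<one>"
    using a1_a3_commute commutator_eq_one_iff[OF basis_carrier(1,3)]
      group_hom.hom_one[OF f_group_hom] by simp
  finally show ?thesis using commutator_eq_one_iff by simp
qed

lemma comm_group_subgroup_generated_a123: "comm_group (subgroup_generated G {a 1, a 2, a 3})"
  by (rule comm_group_subgroup_generatedI)
    (use basis_carrier a1_a2_commute a1_a3_commute a2_a3_commute in auto)

lemma comm_group_iff_a1_a4_commute: "comm_group G \<longleftrightarrow> a 1 \<otimes> a 4 = a 4 \<otimes> a 1"
proof
  assume "a 1 \<otimes> a 4 = a 4 \<otimes> a 1"
  then show "comm_group G"
    by (intro comm_groupI_generate[OF Gseq_Hseq_basis(1)])
      (use basis_carrier a1_a2_commute a1_a3_commute a2_a3_commute a2_a4_commute a3_a4_commute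
        in auto)
qed (use basis_carrier in \<open>simp add: comm_groupE(4)\<close>)

lemma commutators_a1_trivial:
  assumes "j \<in> {2..3}"
  shows "commutator G (a 1) (a j) = \<one>"
proof -
  have "j = 2 \<or> j = 3" using assms by auto
  then show ?thesis
    using a1_a2_commute a1_a3_commute commutator_eq_one_iff[OF basis_carrier(1,2)]
      commutator_eq_one_iff[OF basis_carrier(1,3)] by auto
qed

lemma not_cutoff_point_2: "\<not> cutoff_point G 4 a 2"
  using cutoff_point_ge[of G 4 a 2 3] commutators_a1_trivial by auto

lemma cutoff_point_3:
  assumes "\<not> comm_group G"
  shows "cutoff_point G 4 a 3"
proof (rule cutoff_pointI)
  show "3 = 4 \<or> commutator G (a 1) (a (Suc 3)) \<noteq> \<one>"
    using assms comm_group_iff_a1_a4_commute commutator_eq_one_iff[OF basis_carrier(1,4)] by simp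
qed (use commutators_a1_trivial in auto)

end

theorem mainTheorem9:
  fixes G :: "('a, 'b) monoid_scheme" and H :: "'a set" and f :: "'a \<Rightarrow> 'a"
    and p :: enat and a :: "nat \<Rightarrow> 'a"
  assumes "SSP_group G H f p"
    and "SSP_length G p = 4"
    and "canonical_basis G H f 4 a"
  shows "\<not> cutoff_point G 4 a 2 \<and>
         (\<not> comm_group G \<longrightarrow>
            comm_group (subgroup_generated G {a 1, a 2, a 3}) \<and> cutoff_point G 4 a 3)"
proof -
  have "group G" using assms(1) unfolding SSP_group_def by blast
  then interpret ssp_basis4 G H f p a
    using assms(1,3) by (simp add: ssp_basis4_def ssp_basis4_axioms_def)
  show ?thesis
    using not_cutoff_point_2 cutoff_point_3 comm_group_subgroup_generated_a123 by blast
qed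

end
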